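(* Let $A=(a_{ij})$ be the adjacency matrix of a graph on $[n]$ ($a_{ii}=0$), $Z_1,\dots,Z_n\in\mathbb R^{d_n}$, and let the LG-GNN quantities be $\lambda_i^0=\frac1{\sqrt{n-1}}\sum_\ell a_{i\ell}Z_\ell$, $\lambda_i^k=\lambda_i^{k-1}+\frac1{n-1}\sum_\ell a_{i\ell}\lambda_\ell^{k-1}$ ($k=1,\dots,L$), $\hat q_{i,j}^{(2)}=\langle\lambda_i^0,\lambda_j^0\rangle$ and $\hat q_{i,j}^{(k)}=\langle\lambda_i^{k-2},\lambda_j^0\rangle-\sum_{r=0}^{k-3}\binom{k-2}r\hat q_{i,j}^{(r+2)}$ for $3\le k\le L+2$. Then for all $2\le k\le L+2$, $$\hat q_{i,j}^{(k)}=\Big\langle\frac1{\sqrt{n-1}}\sum_{\ell\le n}a_{j\ell}Z_\ell,\ \frac1{\sqrt{n-1}}\sum_{\ell\le n}\hat W_{n,i,\ell}^{(k-1)}Z_\ell\Big\rangle.$$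
   Context: Empirical moment: $\hat W_{n,i,j}^{(k)}=\frac1{(n-1)^{k-1}}\sum_{r_1,\dots,r_{k-1}\le n}a_{ir_1}a_{r_1r_2}\cdots a_{r_{k-1}j}$, so $\hat W^{(1)}_{n,i,j}=a_{ij}$. *)

theory Defs
  imports "HOL-Analysis.Analysis"
begin

definition is_adjacency :: "nat \<Rightarrow> (nat \<Rightarrow> nat \<Rightarrow> real) \<Rightarrow> bool" where
  "is_adjacency n a \<longleftrightarrow>
     (\<forall>i\<in>{1..n}. \<forall>j\<in>{1..n}. a i j \<in> {0, 1} \<and> a i j = a j i) \<and>
     (\<forall>i\<in>{1..n}. a i i = 0)"

primrec lam :: "nat \<Rightarrow> (nat \<Rightarrow> nat \<Rightarrow> real) \<Rightarrow> (nat \<Rightarrow> real ^ 'd) \<Rightarrow> nat \<Rightarrow> nat \<Rightarrow> real ^ 'd" where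
  "lam n a Z 0 i = (1 / sqrt (real n - 1)) *\<^sub>R (\<Sum>l\<in>{1..n}. a i l *\<^sub>R Z l)"
| "lam n a Z (Suc k) i = lam n a Z k i + (1 / (real n - 1)) *\<^sub>R (\<Sum>l\<in>{1..n}. a i l *\<^sub>R lam n a Z k l)"

text \<open>qhat^(k)_{i,j}; for k = 2 (and, by convention, k < 2) it is <lambda_i^0, lambda_j^0>.\<close>
function qhat :: "nat \<Rightarrow> (nat \<Rightarrow> nat \<Rightarrow> real) \<Rightarrow> (nat \<Rightarrow> real ^ 'd) \<Rightarrow> nat \<Rightarrow> nat \<Rightarrow> nat \<Rightarrow> real" where
  "qhat n a Z k i j =
     (if k \<le> 2 then inner (lam n a Z 0 i) (lam n a Z 0 j)
      else inner (lam n a Z (k - 2) i) (lam n a Z 0 j)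
           - (\<Sum>r<k - 2. real ((k - 2) choose r) * qhat n a Z (r + 2) i j))"
  by pat_completeness auto
termination
  by (relation "Wellfounded.measure (\<lambda>(n, a, Z, k, i, j). k)") auto

text \<open>Empirical moment hat W^(k)_{n,i,j}: sum over r_1..r_{k-1} in [n] of
  a_{i r_1} a_{r_1 r_2} ... a_{r_{k-1} j}, divided by (n-1)^(k-1).
  The path is p 0 = i, p t = r t (0<t<k), p k = j.\<close>
definition What :: "nat \<Rightarrow> (nat \<Rightarrow> nat \<Rightarrow> real) \<Rightarrow> nat \<Rightarrow> nat \<Rightarrow> nat \<Rightarrow> real" where
  "What n a k i j =
     (1 / (real n - 1) ^ (k - 1)) *
     (\<Sum>r\<in>({1..k - 1} \<rightarrow>\<^sub>E {1..n}).
        \<Prod>t<k. a (if t = 0 then i else r t) (if Suc t = k then j else r (Suc t)))"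

end

theory Submission imports Defs begin

text \<open>Let mu_m(i) = (n-1)^(-1/2) sum_l W^(m+1)_{i,l} Z_l (this is walk_feature). Splitting off
  the first step of a walk gives mu_0 = lambda^0 and mu_(m+1) = A mu_m / (n-1), hence
  lambda^k = (I + A/(n-1))^k lambda^0 = sum_r C(k,r) mu_r by Pascal's rule. The recursion defining
  qhat^(k) inverts exactly this binomial expansion, so strong induction gives
  qhat^(m+2)_{i,j} = <mu_m(i), lambda^0_j>. Neither symmetry nor the 0/1 entries of A are used.\<close>

definition walk_weight :: "('v \<Rightarrow> 'v \<Rightarrow> 'a::comm_monoid_mult) \<Rightarrow> nat \<Rightarrow> 'v \<Rightarrow> 'v \<Rightarrow> (nat \<Rightarrow> 'v) \<Rightarrow> 'a" where
  "walk_weight a k i j r =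
     (\<Prod>t<k. a (if t = 0 then i else r t) (if Suc t = k then j else r (Suc t)))"

definition walk_sum :: "'v set \<Rightarrow> ('v \<Rightarrow> 'v \<Rightarrow> 'a::comm_semiring_1) \<Rightarrow> nat \<Rightarrow> 'v \<Rightarrow> 'v \<Rightarrow> 'a" where
  "walk_sum S a k i j = (\<Sum>r\<in>{1..k - 1} \<rightarrow>\<^sub>E S. walk_weight a k i j r)"

lemma What_eq_walk_sum: "What n a k i j = walk_sum {1..n} a k i j / (real n - 1) ^ (k - 1)"
  unfolding What_def walk_sum_def walk_weight_def by simp

lemma walk_sum_1 [simp]: "walk_sum S a (Suc 0) i j = a i j"
  unfolding walk_sum_def walk_weight_def by simp

lemma walk_weight_Suc_fun_upd:
  "walk_weight a (Suc (Suc m)) i j (r(Suc m := y)) = walk_weight a (Suc m) i y r * a y j"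
proof -
  have "(\<Prod>t<Suc m. a (if t = 0 then i else (r(Suc m := y)) t)
            (if Suc t = Suc (Suc m) then j else (r(Suc m := y)) (Suc t)))
      = walk_weight a (Suc m) i y r"
    unfolding walk_weight_def by (rule prod.cong) auto
  then show ?thesis
    unfolding walk_weight_def[of a "Suc (Suc m)"] prod.lessThan_Suc[of _ "Suc m"] by simp
qed

lemma walk_sum_Suc_right:
  "walk_sum S a (Suc (Suc m)) i j = (\<Sum>y\<in>S. walk_sum S a (Suc m) i y * a y j)"
proof -
  have walks: "{1..Suc m} \<rightarrow>\<^sub>E S = (\<lambda>(y, r). r(Suc m := y)) ` (S \<times> ({1..m} \<rightarrow>\<^sub>E S))"
    using PiE_insert_eq[of "Suc m" "{1..m}" "\<lambda>_. S"] by (simp add: atLeastAtMostSuc_conv)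
  have inj: "inj_on (\<lambda>(y, r). r(Suc m := y)) (S \<times> ({1..m} \<rightarrow>\<^sub>E S))"
    using inj_combinator[of "Suc m" "{1..m}" "\<lambda>_. S"] by simp
  have "walk_sum S a (Suc (Suc m)) i j
      = (\<Sum>(y, r)\<in>S \<times> ({1..m} \<rightarrow>\<^sub>E S). walk_weight a (Suc m) i y r * a y j)"
    unfolding walk_sum_def diff_Suc_1 walks sum.reindex[OF inj]
    by (simp add: comp_def case_prod_beta walk_weight_Suc_fun_upd)
  then show ?thesis
    unfolding walk_sum_def by (simp add: sum.cartesian_product sum_distrib_right)
qed

lemma walk_sum_Suc_left:
  "walk_sum S a (Suc (Suc m)) i j = (\<Sum>y\<in>S. a i y * walk_sum S a (Suc m) y j)"
proof (induction m arbitrary: j)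
  case 0
  show ?case by (simp add: walk_sum_Suc_right)
next
  case (Suc m)
  have "walk_sum S a (Suc (Suc (Suc m))) i j = (\<Sum>x\<in>S. walk_sum S a (Suc (Suc m)) i x * a x j)"
    by (rule walk_sum_Suc_right)
  also have "\<dots> = (\<Sum>x\<in>S. \<Sum>y\<in>S. a i y * walk_sum S a (Suc m) y x * a x j)"
    by (simp add: Suc.IH sum_distrib_right)
  also have "\<dots> = (\<Sum>y\<in>S. a i y * walk_sum S a (Suc (Suc m)) y j)"
    by (subst sum.swap) (simp add: walk_sum_Suc_right sum_distrib_left mult.assoc)
  finally show ?case .
qed

lemma What_Suc:
  "What n a (Suc (Suc m)) i j = (\<Sum>y\<in>{1..n}. a i y * What n a (Suc m) y j) / (real n - 1)"
  by (simp add: What_eq_walk_sum walk_sum_Suc_left sum_divide_distrib ac_simps)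

definition walk_feature :: "nat \<Rightarrow> (nat \<Rightarrow> nat \<Rightarrow> real) \<Rightarrow> (nat \<Rightarrow> real ^ 'd) \<Rightarrow> nat \<Rightarrow> nat \<Rightarrow> real ^ 'd" where
  "walk_feature n a Z m i = (1 / sqrt (real n - 1)) *\<^sub>R (\<Sum>l\<in>{1..n}. What n a (Suc m) i l *\<^sub>R Z l)"

lemma walk_feature_0: "walk_feature n a Z 0 i = lam n a Z 0 i"
  by (simp add: walk_feature_def What_eq_walk_sum)

lemma walk_feature_Suc:
  "walk_feature n a Z (Suc m) i = (1 / (real n - 1)) *\<^sub>R (\<Sum>y\<in>{1..n}. a i y *\<^sub>R walk_feature n a Z m y)"
proof -
  have "(\<Sum>l\<in>{1..n}. What n a (Suc (Suc m)) i l *\<^sub>R Z l)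
      = (1 / (real n - 1)) *\<^sub>R (\<Sum>l\<in>{1..n}. \<Sum>y\<in>{1..n}. a i y *\<^sub>R What n a (Suc m) y l *\<^sub>R Z l)"
    by (simp add: What_Suc scaleR_sum_left scaleR_sum_right sum_divide_distrib)
  also have "\<dots> = (1 / (real n - 1)) *\<^sub>R (\<Sum>y\<in>{1..n}. a i y *\<^sub>R (\<Sum>l\<in>{1..n}. What n a (Suc m) y l *\<^sub>R Z l))"
    by (subst sum.swap) (simp add: scaleR_sum_right)
  finally show ?thesis
    unfolding walk_feature_def by (simp add: scaleR_sum_right ac_simps)
qed

lemma sum_binomial_Suc_scaleR:
  fixes F :: "nat \<Rightarrow> 'a::real_vector"
  shows "(\<Sum>r\<le>Suc k. real (Suc k choose r) *\<^sub>R F r)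
       = (\<Sum>r\<le>k. real (k choose r) *\<^sub>R (F r + F (Suc r)))"
proof -
  have pascal: "(\<Sum>r\<le>Suc k. real (Suc k choose r) *\<^sub>R F r)
      = F 0 + (\<Sum>r\<le>k. real (k choose r) *\<^sub>R F (Suc r)) + (\<Sum>r\<le>k. real (k choose Suc r) *\<^sub>R F (Suc r))"
    by (simp only: sum.atMost_Suc_shift binomial_n_0 binomial_Suc_Suc of_nat_add of_nat_1
        scaleR_one scaleR_add_left sum.distrib add.assoc)
  have top_vanishes: "(\<Sum>r\<le>k. real (k choose Suc r) *\<^sub>R F (Suc r)) = (\<Sum>r<k. real (k choose Suc r) *\<^sub>R F (Suc r))"
    by (simp add: lessThan_Suc_atMost[symmetric])
  have shift: "F 0 + (\<Sum>r<k. real (k choose Suc r) *\<^sub>R F (Suc r)) = (\<Sum>r\<le>k. real (k choose r) *\<^sub>R F r)"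
    by (simp only: sum.atMost_shift binomial_n_0 of_nat_1 scaleR_one)
  show ?thesis
    using pascal top_vanishes shift by (simp add: scaleR_add_right sum.distrib algebra_simps)
qed

lemma lam_eq_binomial_walk_features:
  "lam n a Z k i = (\<Sum>r\<le>k. real (k choose r) *\<^sub>R walk_feature n a Z r i)"
proof (induction k arbitrary: i)
  case 0
  show ?case by (simp add: walk_feature_0)
next
  case (Suc k)
  have "(1 / (real n - 1)) *\<^sub>R (\<Sum>l\<in>{1..n}. a i l *\<^sub>R lam n a Z k l)
      = (\<Sum>r\<le>k. real (k choose r) *\<^sub>R walk_feature n a Z (Suc r) i)"
    unfolding Suc.IH walk_feature_Suc
    by (simp add: scaleR_sum_right algebra_simps) (rule sum.swap)
  then show ?case
    unfolding lam.simps(2) sum_binomial_Suc_scaleR Suc.IH by (simp add: scaleR_add_right sum.distrib)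
qed

lemma qhat_eq_inner_walk_feature:
  "qhat n a Z (m + 2) i j = inner (walk_feature n a Z m i) (lam n a Z 0 j)"
proof (induction m rule: less_induct)
  case (less m)
  show ?case
  proof (cases "m = 0")
    case True
    then show ?thesis by (simp add: walk_feature_0)
  next
    case False
    let ?c = "\<lambda>r. real (m choose r) * inner (walk_feature n a Z r i) (lam n a Z 0 j)"
    have "inner (lam n a Z m i) (lam n a Z 0 j) = (\<Sum>r\<le>m. ?c r)"
      by (simp add: lam_eq_binomial_walk_features inner_sum_left)
    then have "qhat n a Z (m + 2) i j = (\<Sum>r\<le>m. ?c r) - (\<Sum>r<m. ?c r)"
      using False less by simp
    then show ?thesis
      by (simp add: lessThan_Suc_atMost[symmetric])
  qed
qed

theorem lemmaD5:
  fixes n L :: nat and a :: "nat \<Rightarrow> nat \<Rightarrow> real" and Z :: "nat \<Rightarrow> real ^ 'd"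
    and i j k :: nat
  assumes "n \<ge> 2" and "is_adjacency n a"
    and "i \<in> {1..n}" and "j \<in> {1..n}"
    and "2 \<le> k" and "k \<le> L + 2"
  shows "qhat n a Z k i j =
     inner ((1 / sqrt (real n - 1)) *\<^sub>R (\<Sum>l\<in>{1..n}. a j l *\<^sub>R Z l))
           ((1 / sqrt (real n - 1)) *\<^sub>R (\<Sum>l\<in>{1..n}. What n a (k - 1) i l *\<^sub>R Z l))"
proof -
  obtain m where k: "k = m + 2"
    using \<open>2 \<le> k\<close> by (metis add.commute le_Suc_ex)
  have "qhat n a Z k i j = inner (lam n a Z 0 j) (walk_feature n a Z m i)"
    unfolding k qhat_eq_inner_walk_feature by (rule inner_commute)
  then show ?thesis
    by (simp add: k walk_feature_def)
qed

end
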